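(* Let $q\in\,]0,1[$, $\omega\ge 0$, let $I$ be an interval containing $\omega_0:=\omega/(1-q)$, let $c\in I$, and let $f:I\to\mathbb{R}$ be Hahn symmetric integrable on $I$. Suppose $f(t)\ge 0$ for all $t\in\{\sigma^{2n+1}(c):n\in\mathbb{N}_0\}\cup\{\omega_0\}$. 1. If $c\ge\omega_0$, then $\int_{\omega_0}^c f(t)\,\tilde d_{q,\omega}t\ge 0$. 2. If $c<\omega_0$, then $\int_c^{\omega_0}f(t)\,\tilde d_{q,\omega}t\ge 0$.
   Context: $\sigma(t):=qt+\omega$, $\sigma^{-1}(t):=q^{-1}(t-\omega)$, $\sigma^k$ is the $k$-fold composition of $\sigma$. Hahn symmetric integral: for $x\in I$, $\int_{\omega_0}^x f(t)\,\tilde d_{q,\omega}t:=(\sigma^{-1}(x)-\sigma(x))\sum_{n=0}^\infty q^{2n+1}f(\sigma^{2n+1}(x))$, and for $a,b\in I$, $\int_a^b f\,\tilde d_{q,\omega}t:=\int_{\omega_0}^b f\,\tilde d_{q,\omega}t-\int_{\omega_0}^a f\,\tilde d_{q,\omega}t$, provided the series converge. $f$ is Hahn symmetric integrable on $I$ if these series converge for every point of $I$. *)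

theory Defs
  imports "HOL-Analysis.Analysis"
begin

definition hsigma :: "real \<Rightarrow> real \<Rightarrow> real \<Rightarrow> real" where
  "hsigma q \<omega> t = q * t + \<omega>"

definition hsigma_inv :: "real \<Rightarrow> real \<Rightarrow> real \<Rightarrow> real" where
  "hsigma_inv q \<omega> t = (t - \<omega>) / q"

definition omega0 :: "real \<Rightarrow> real \<Rightarrow> real" where
  "omega0 q \<omega> = \<omega> / (1 - q)"

definition hahn_sym_term :: "real \<Rightarrow> real \<Rightarrow> (real \<Rightarrow> real) \<Rightarrow> real \<Rightarrow> nat \<Rightarrow> real" where
  "hahn_sym_term q \<omega> f x n = q ^ (2*n+1) * f ((hsigma q \<omega> ^^ (2*n+1)) x)"

text \<open>Hahn symmetric integral from omega0 to x (meaningful when the series converges).\<close>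
definition hahn_sym_int0 :: "real \<Rightarrow> real \<Rightarrow> (real \<Rightarrow> real) \<Rightarrow> real \<Rightarrow> real" where
  "hahn_sym_int0 q \<omega> f x =
     (hsigma_inv q \<omega> x - hsigma q \<omega> x) * (\<Sum>n. hahn_sym_term q \<omega> f x n)"

definition hahn_sym_int :: "real \<Rightarrow> real \<Rightarrow> (real \<Rightarrow> real) \<Rightarrow> real \<Rightarrow> real \<Rightarrow> real" where
  "hahn_sym_int q \<omega> f a b = hahn_sym_int0 q \<omega> f b - hahn_sym_int0 q \<omega> f a"

definition hahn_sym_integrable_on :: "real \<Rightarrow> real \<Rightarrow> (real \<Rightarrow> real) \<Rightarrow> real set \<Rightarrow> bool" where
  "hahn_sym_integrable_on q \<omega> f I \<longleftrightarrow> (\<forall>x\<in>I. summable (hahn_sym_term q \<omega> f x))"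

end

theory Submission
  imports Defs
begin

text \<open>
  The symmetric integral from \<open>\<omega>\<^sub>0\<close> to \<open>x\<close> is the product of the width
  \<open>\<sigma>\<^sup>-\<^sup>1(x) - \<sigma>(x) = (x - \<omega>\<^sub>0)(1/q - q)\<close> with a series whose terms are
  nonnegative as soon as \<open>f\<close> is nonnegative on the odd iterates \<open>\<sigma>\<^sup>2\<^sup>n\<^sup>+\<^sup>1(x)\<close>.
  Hence its sign is the sign of \<open>x - \<omega>\<^sub>0\<close>; and it vanishes at \<open>x = \<omega>\<^sub>0\<close>, so
  both oriented integrals between \<open>c\<close> and \<open>\<omega>\<^sub>0\<close> are nonnegative.
\<close>

lemma hsigma_inv_minus_hsigma:
  assumes "q \<noteq> 0" "q \<noteq> 1"
  shows "hsigma_inv q \<omega> x - hsigma q \<omega> x = (x - omega0 q \<omega>) * (1/q - q)"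
  using assms unfolding hsigma_inv_def hsigma_def omega0_def
  by (simp add: field_simps)

lemma hahn_sym_int0_omega0:
  assumes "q \<noteq> 0" "q \<noteq> 1"
  shows "hahn_sym_int0 q \<omega> f (omega0 q \<omega>) = 0"
  unfolding hahn_sym_int0_def hsigma_inv_minus_hsigma[OF assms] by simp

lemma suminf_hahn_sym_term_nonneg:
  assumes "0 \<le> q" "summable (hahn_sym_term q \<omega> f x)"
    and "\<And>n. f ((hsigma q \<omega> ^^ (2*n+1)) x) \<ge> 0"
  shows "(\<Sum>n. hahn_sym_term q \<omega> f x n) \<ge> 0"
proof (rule suminf_nonneg)
  show "summable (hahn_sym_term q \<omega> f x)" by (fact assms(2))
  show "0 \<le> hahn_sym_term q \<omega> f x n" for n
    unfolding hahn_sym_term_def using assms(1,3) by (intro mult_nonneg_nonneg) simp_all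
qed

lemma hahn_sym_int0_sign:
  assumes "0 < q" "q < 1" "summable (hahn_sym_term q \<omega> f x)"
    and "\<And>n. f ((hsigma q \<omega> ^^ (2*n+1)) x) \<ge> 0"
  shows "x \<ge> omega0 q \<omega> \<Longrightarrow> hahn_sym_int0 q \<omega> f x \<ge> 0"
    and "x \<le> omega0 q \<omega> \<Longrightarrow> hahn_sym_int0 q \<omega> f x \<le> 0"
proof -
  have width: "1/q - q > 0"
  proof -
    have "q * q < 1 * 1" using assms(1,2) by (intro mult_strict_mono) simp_all
    then show ?thesis using assms(1) by (simp add: field_simps)
  qed
  have series: "(\<Sum>n. hahn_sym_term q \<omega> f x n) \<ge> 0"
    using assms by (intro suminf_hahn_sym_term_nonneg) simp_all
  have int0: "hahn_sym_int0 q \<omega> f x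
      = (x - omega0 q \<omega>) * (1/q - q) * (\<Sum>n. hahn_sym_term q \<omega> f x n)"
    using assms(1,2) unfolding hahn_sym_int0_def by (simp add: hsigma_inv_minus_hsigma)
  show "x \<ge> omega0 q \<omega> \<Longrightarrow> hahn_sym_int0 q \<omega> f x \<ge> 0"
    unfolding int0 using width series by simp
  show "x \<le> omega0 q \<omega> \<Longrightarrow> hahn_sym_int0 q \<omega> f x \<le> 0"
    unfolding int0 using width series
    by (intro mult_nonpos_nonneg) (simp_all add: mult_nonpos_nonneg)
qed

theorem corollary2p18:
  fixes q \<omega> c :: real and I :: "real set" and f :: "real \<Rightarrow> real"
  assumes "0 < q" "q < 1" "0 \<le> \<omega>"
    and "is_interval I" "omega0 q \<omega> \<in> I" "c \<in> I"
    and "hahn_sym_integrable_on q \<omega> f I"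
    and "\<forall>t \<in> {(hsigma q \<omega> ^^ (2*n+1)) c | n. True} \<union> {omega0 q \<omega>}. f t \<ge> 0"
  shows "(c \<ge> omega0 q \<omega> \<longrightarrow> hahn_sym_int q \<omega> f (omega0 q \<omega>) c \<ge> 0)
       \<and> (c < omega0 q \<omega> \<longrightarrow> hahn_sym_int q \<omega> f c (omega0 q \<omega>) \<ge> 0)"
proof -
  have summable: "summable (hahn_sym_term q \<omega> f c)"
    using assms(6,7) unfolding hahn_sym_integrable_on_def by blast
  have nonneg: "f ((hsigma q \<omega> ^^ (2*n+1)) c) \<ge> 0" for n
    using assms(8) by blast
  note sign = hahn_sym_int0_sign[OF assms(1,2) summable nonneg]
  have "hahn_sym_int0 q \<omega> f (omega0 q \<omega>) = 0"
    using assms(1,2) by (simp add: hahn_sym_int0_omega0)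
  then show ?thesis
    unfolding hahn_sym_int_def using sign by auto
qed

end
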